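(* Let $S$ be epsilon-strongly graded and suppose the set of epsilon-central elements of $B(\mathcal{E}_G)^*$ is the finite set $\{e_1,\dots,e_k\}$. Put $e'=1_S-\sum_{j=1}^ke_j$. Then $e_1,\dots,e_k,e'$ are pairwise orthogonal central idempotents of $S$ summing to $1_S$, and $S=\bigoplus_{i=1}^ke_iS\oplus e'S$. Moreover: (i) for each $i$, $e_iS=\bigoplus_{g\in N(e_i)}e_iS_g$ is strongly $N(e_i)$-graded, and $e_i$ cannot be written as $f_1+\dots+f_m$ with $m\ge2$ and $f_1,\dots,f_m\in B(\mathcal{E}_G)^*$ pairwise orthogonal; (ii) if $e'=0$, then $S_N=\bigoplus_{g\in N}S_g$ is strongly $N$-graded, where $N=\bigcap_{i=1}^kN(e_i)$; (iii) if $e'\neq0$, then $e'S=\bigoplus_{g\in G}e'S_g$ is an epsilon-strongly $G$-graded ring (with identity $e'$ and $\epsilon'_g=e'\epsilon_g$).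
   Context: $G$ is a group with identity $e$; $S=\bigoplus_{g\in G}S_g$ is an associative unital ring graded by $G$, $R=S_e$, $XY$ denotes finite sums of products. $S$ is epsilon-strongly graded: each ideal $S_gS_{g^{-1}}$ of $R$ has an identity $\epsilon_g$ with $\epsilon_gs=s=s\epsilon_{g^{-1}}$ for $s\in S_g$; $\epsilon_e=1_S$; each $\epsilon_g$ is an idempotent in $Z(R)$. $B(\mathcal{E}_G)$ is the multiplicative semigroup generated by $\{\epsilon_g:g\in G\}$, $B(\mathcal{E}_G)^*=B(\mathcal{E}_G)\setminus\{0\}$, ordered by $a\le b$ iff $a=ab$. For $r\in B(\mathcal{E}_G)^*$, $N(r)=\{g\in G:r\epsilon_g=r\}$. An element $r\in B(\mathcal{E}_G)^*$ is epsilon-central if it is minimal in $B(\mathcal{E}_G)^*$ and $N(r)$ is a subgroup of $G$ (equivalently, for minimal $r$, $r$ is central in $S$). A ring graded by a group $H$ is strongly $H$-graded if $A_gA_h=A_{gh}$ for all $g,h\in H$. *)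

theory Defs
  imports "HOL-Algebra.Group"
begin

text \<open>The ambient ring S is the whole type 'a (class ring_1); the grading group G is a
HOL-Algebra group. Subrings are carrier sets A with their own identity element u.\<close>

definition central :: "'a::ring_1 \<Rightarrow> bool" where
  "central x \<longleftrightarrow> (\<forall>y. x * y = y * x)"

definition add_subgroup :: "'a::ring_1 set \<Rightarrow> bool" where
  "add_subgroup X \<longleftrightarrow> 0 \<in> X \<and> (\<forall>x\<in>X. \<forall>y\<in>X. x - y \<in> X)"

definition unital_subring :: "'a::ring_1 set \<Rightarrow> 'a \<Rightarrow> bool" where
  "unital_subring A u \<longleftrightarrow> add_subgroup A \<and> (\<forall>x\<in>A. \<forall>y\<in>A. x * y \<in> A) \<and>
     u \<in> A \<and> (\<forall>x\<in>A. u * x = x \<and> x * u = x)"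

definition sumprods :: "'a::ring_1 set \<Rightarrow> 'a set \<Rightarrow> 'a set" where
  "sumprods X Y = {\<Sum>i<n. x i * y i | (n::nat) x y. \<forall>i<n. x i \<in> X \<and> y i \<in> Y}"

definition decomp :: "'i set \<Rightarrow> ('i \<Rightarrow> 'a::ring_1 set) \<Rightarrow> ('i \<Rightarrow> 'a) \<Rightarrow> bool" where
  "decomp I X f \<longleftrightarrow> finite {i. f i \<noteq> 0} \<and> (\<forall>i. i \<notin> I \<longrightarrow> f i = 0) \<and> (\<forall>i\<in>I. f i \<in> X i)"

definition dsum_set :: "'i set \<Rightarrow> ('i \<Rightarrow> 'a::ring_1 set) \<Rightarrow> 'a set" where
  "dsum_set I X = {sum f {i. f i \<noteq> 0} | f. decomp I X f}"

definition is_internal_dsum :: "'i set \<Rightarrow> ('i \<Rightarrow> 'a::ring_1 set) \<Rightarrow> 'a set \<Rightarrow> bool" where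
  "is_internal_dsum I X A \<longleftrightarrow> A = dsum_set I X \<and>
     (\<forall>f f'. decomp I X f \<and> decomp I X f' \<and> sum f {i. f i \<noteq> 0} = sum f' {i. f' i \<noteq> 0}
        \<longrightarrow> f = f')"

definition graded_ring :: "('g, 'b) monoid_scheme \<Rightarrow> ('g \<Rightarrow> 'a::ring_1 set) \<Rightarrow> 'a set \<Rightarrow> 'a \<Rightarrow> bool" where
  "graded_ring G Sg A u \<longleftrightarrow> group G \<and> unital_subring A u \<and>
     (\<forall>g\<in>carrier G. add_subgroup (Sg g)) \<and> is_internal_dsum (carrier G) Sg A \<and>
     (\<forall>g\<in>carrier G. \<forall>h\<in>carrier G. \<forall>x\<in>Sg g. \<forall>y\<in>Sg h. x * y \<in> Sg (g \<otimes>\<^bsub>G\<^esub> h))"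

definition strongly_graded_ring :: "('g, 'b) monoid_scheme \<Rightarrow> ('g \<Rightarrow> 'a::ring_1 set) \<Rightarrow> 'a set \<Rightarrow> 'a \<Rightarrow> bool" where
  "strongly_graded_ring G Sg A u \<longleftrightarrow> graded_ring G Sg A u \<and>
     (\<forall>g\<in>carrier G. \<forall>h\<in>carrier G. sumprods (Sg g) (Sg h) = Sg (g \<otimes>\<^bsub>G\<^esub> h))"

text \<open>Epsilon-strongly graded, with the given choice eps g of the identity of S_g S_{g^-1}.\<close>
definition eps_strongly_graded ::
  "('g, 'b) monoid_scheme \<Rightarrow> ('g \<Rightarrow> 'a::ring_1 set) \<Rightarrow> 'a set \<Rightarrow> 'a \<Rightarrow> ('g \<Rightarrow> 'a) \<Rightarrow> bool" where
  "eps_strongly_graded G Sg A u eps \<longleftrightarrow> graded_ring G Sg A u \<and>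
     (\<forall>g\<in>carrier G. eps g \<in> sumprods (Sg g) (Sg (inv\<^bsub>G\<^esub> g)) \<and>
        (\<forall>s\<in>Sg g. eps g * s = s \<and> s * eps (inv\<^bsub>G\<^esub> g) = s))"

definition Bsemi :: "('g, 'b) monoid_scheme \<Rightarrow> ('g \<Rightarrow> 'a::ring_1) \<Rightarrow> 'a set" where
  "Bsemi G eps = {prod_list (map eps gs) | gs. gs \<noteq> [] \<and> set gs \<subseteq> carrier G}"

definition Bstar :: "('g, 'b) monoid_scheme \<Rightarrow> ('g \<Rightarrow> 'a::ring_1) \<Rightarrow> 'a set" where
  "Bstar G eps = Bsemi G eps - {0}"

definition Nset :: "('g, 'b) monoid_scheme \<Rightarrow> ('g \<Rightarrow> 'a::ring_1) \<Rightarrow> 'a \<Rightarrow> 'g set" where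
  "Nset G eps r = {g \<in> carrier G. r * eps g = r}"

text \<open>Minimal w.r.t. a \<le> b iff a = a b.\<close>
definition minimal_B :: "('g, 'b) monoid_scheme \<Rightarrow> ('g \<Rightarrow> 'a::ring_1) \<Rightarrow> 'a \<Rightarrow> bool" where
  "minimal_B G eps r \<longleftrightarrow> r \<in> Bstar G eps \<and> (\<forall>b\<in>Bstar G eps. b = b * r \<longrightarrow> b = r)"

definition eps_central :: "('g, 'b) monoid_scheme \<Rightarrow> ('g \<Rightarrow> 'a::ring_1) \<Rightarrow> 'a \<Rightarrow> bool" where
  "eps_central G eps r \<longleftrightarrow> minimal_B G eps r \<and> subgroup (Nset G eps r) G"

end

theory Submission
  imports Defs
begin

(* Every element of B(E_G) is a product of eps g's, which are idempotents of degree e commuting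
   with all of S_e; so minimal elements of B(E_G)^* are pairwise orthogonal, and each is either
   absorbed by or annihilates a given eps g. Moving a minimal r across a homogeneous s of degree g
   turns it into a product of eps (g h); if N(r) is a subgroup and g lies in it, r absorbs that
   product, and since eps g lies in S_g S_{g^-1} this forces r s = s r. For g outside N(r) both
   r s and s r vanish. Thus the epsilon-central elements are orthogonal central idempotents, and
   the rest is about corner rings c S: r eps g = r on N(r) gives the strong grading of r S, e' S
   inherits the epsilon-strong grading, and if e' = 0 then eps g = sum of r eps g = 1 for g in
   the common stabilizer. *)

lemma add_subgroup_zero: "add_subgroup X \<Longrightarrow> 0 \<in> X"
  by (simp add: add_subgroup_def)

lemma add_subgroup_diff: "add_subgroup X \<Longrightarrow> x \<in> X \<Longrightarrow> y \<in> X \<Longrightarrow> x - y \<in> X"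
  by (simp add: add_subgroup_def)

lemma add_subgroup_add: "add_subgroup X \<Longrightarrow> x \<in> X \<Longrightarrow> y \<in> X \<Longrightarrow> x + y \<in> X"
  using add_subgroup_diff[of X x "0 - y"] add_subgroup_diff[of X 0 y] add_subgroup_zero[of X] by simp

lemma add_subgroup_sum: "add_subgroup X \<Longrightarrow> (\<And>i. i \<in> A \<Longrightarrow> f i \<in> X) \<Longrightarrow> sum f A \<in> X"
  by (induction A rule: infinite_finite_induct) (simp_all add: add_subgroup_zero add_subgroup_add)

lemma add_subgroup_left_mult_image:
  assumes "add_subgroup X"
  shows "add_subgroup ((*) c ` X)"
  unfolding add_subgroup_def
proof (intro conjI ballI)
  show "0 \<in> (*) c ` X" using add_subgroup_zero[OF assms] by (auto intro: image_eqI[of _ _ 0])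
  show "x - y \<in> (*) c ` X" if "x \<in> (*) c ` X" "y \<in> (*) c ` X" for x y
    using that add_subgroup_diff[OF assms] by (auto simp: right_diff_distrib[symmetric])
qed

lemma sumprodsE:
  assumes "x \<in> sumprods X Y"
  obtains n :: nat and a b where "\<forall>i<n. a i \<in> X" "\<forall>i<n. b i \<in> Y" "x = (\<Sum>i<n. a i * b i)"
  using assms unfolding sumprods_def by blast

lemma sumprodsI:
  assumes "\<And>i. i < (n::nat) \<Longrightarrow> a i \<in> X" "\<And>i. i < n \<Longrightarrow> b i \<in> Y"
  shows "(\<Sum>i<n. a i * b i) \<in> sumprods X Y"
  using assms unfolding sumprods_def by blast

lemma sumprods_subset:
  assumes "add_subgroup Z" "\<And>a b. a \<in> X \<Longrightarrow> b \<in> Y \<Longrightarrow> a * b \<in> Z"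
  shows "sumprods X Y \<subseteq> Z"
  using assms by (auto elim!: sumprodsE intro!: add_subgroup_sum)

lemma sumprods_left_mult:
  assumes "x \<in> sumprods X Y" "\<And>a. a \<in> X \<Longrightarrow> c * a \<in> X'"
  shows "c * x \<in> sumprods X' Y"
  using assms(1)
proof (rule sumprodsE)
  fix n :: nat and a b
  assume "\<forall>i<n. a i \<in> X" "\<forall>i<n. b i \<in> Y" "x = (\<Sum>i<n. a i * b i)"
  then show ?thesis
    using sumprodsI[of n "\<lambda>i. c * a i" X' b Y] assms(2) by (simp add: sum_distrib_left mult.assoc)
qed

lemma sumprods_right_mult:
  assumes "x \<in> sumprods X Y" "\<And>b. b \<in> Y \<Longrightarrow> b * c \<in> Y'"
  shows "x * c \<in> sumprods X Y'"
  using assms(1)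
proof (rule sumprodsE)
  fix n :: nat and a b
  assume "\<forall>i<n. a i \<in> X" "\<forall>i<n. b i \<in> Y" "x = (\<Sum>i<n. a i * b i)"
  then show ?thesis
    using sumprodsI[of n a X "\<lambda>i. b i * c" Y'] assms(2) by (simp add: sum_distrib_right mult.assoc)
qed

lemma sumprods_left_mult_eq:
  assumes "x \<in> sumprods X Y" "\<And>a. a \<in> X \<Longrightarrow> u * a = v * a"
  shows "u * x = v * x"
  using assms(1) by (elim sumprodsE) (simp add: sum_distrib_left mult.assoc[symmetric] assms(2))

lemma sumprods_right_mult_eq:
  assumes "x \<in> sumprods X Y" "\<And>b. b \<in> Y \<Longrightarrow> b * u = b * v"
  shows "x * u = x * v"
  using assms(1) by (elim sumprodsE) (simp add: sum_distrib_right mult.assoc assms(2))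

lemma central_commute: "central c \<Longrightarrow> c * x = x * c"
  by (simp add: central_def)

lemma central_idempotent_mult_mult:
  assumes "central c" "c * c = c"
  shows "(c * x) * (c * y) = c * (x * y)"
  by (metis assms central_commute mult.assoc)

lemma unital_subring_corner:
  assumes "central c" "c * c = c"
  shows "unital_subring (range ((*) c)) c"
  unfolding unital_subring_def add_subgroup_def
proof (intro conjI ballI)
  have cc: "c * (c * x) = c * x" for x by (simp add: assms(2) mult.assoc[symmetric])
  show "0 \<in> range ((*) c)" "c \<in> range ((*) c)"
    by (auto simp: image_iff intro: exI[of _ 0] exI[of _ 1])
  show "x - y \<in> range ((*) c)" "x * y \<in> range ((*) c)" if "x \<in> range ((*) c)" "y \<in> range ((*) c)" for x y
    using that central_idempotent_mult_mult[OF assms] by (auto simp: right_diff_distrib[symmetric])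
  show "c * x = x" "x * c = x" if "x \<in> range ((*) c)" for x
    using that cc central_commute[OF assms(1)] by auto
qed

lemma dsum_setI:
  assumes "\<And>i. i \<in> I \<Longrightarrow> 0 \<in> X i" "finite F" "F \<subseteq> I" "\<And>i. i \<in> F \<Longrightarrow> f i \<in> X i"
  shows "sum f F \<in> dsum_set I X"
proof -
  define f' where "f' i = (if i \<in> F then f i else 0)" for i
  have "decomp I X f'"
    unfolding decomp_def f'_def using assms by (auto intro: finite_subset[OF _ assms(2)])
  moreover have "sum f' {i. f' i \<noteq> 0} = sum f F"
    using assms(2) by (subst sum.mono_neutral_left[of F]) (auto simp: f'_def)
  ultimately show ?thesis unfolding dsum_set_def by force
qed

lemma dsum_setE:
  assumes "x \<in> dsum_set I X"
  obtains F f where "finite F" "F \<subseteq> I" "\<forall>i\<in>F. f i \<in> X i" "x = sum f F"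
  using assms unfolding dsum_set_def decomp_def by blast

lemma add_subgroup_dsum_set:
  assumes "\<And>i. i \<in> I \<Longrightarrow> add_subgroup (X i)"
  shows "add_subgroup (dsum_set I X)"
  unfolding add_subgroup_def
proof (intro conjI ballI)
  have zero: "0 \<in> X i" if "i \<in> I" for i using assms[OF that] by (rule add_subgroup_zero)
  show "0 \<in> dsum_set I X" using dsum_setI[of I X "{}"] zero by simp
  fix x y assume x: "x \<in> dsum_set I X" and y: "y \<in> dsum_set I X"
  obtain F f where F: "finite F" "F \<subseteq> I" "\<forall>i\<in>F. f i \<in> X i" "x = sum f F"
    using x by (rule dsum_setE)
  obtain F' f' where F': "finite F'" "F' \<subseteq> I" "\<forall>i\<in>F'. f' i \<in> X i" "y = sum f' F'"
    using y by (rule dsum_setE)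
  let ?d = "\<lambda>i. (if i \<in> F then f i else 0) - (if i \<in> F' then f' i else 0)"
  have "x - y = sum ?d (F \<union> F')"
    using F F' by (simp add: sum_subtractf flip: sum.inter_restrict)
  moreover have "?d i \<in> X i" if "i \<in> F \<union> F'" for i
    using that F F' zero[of i] by (intro add_subgroup_diff[OF assms]) auto
  then have "sum ?d (F \<union> F') \<in> dsum_set I X"
    using F F' by (intro dsum_setI[OF zero]) auto
  ultimately show "x - y \<in> dsum_set I X" by simp
qed

text \<open>The i-th summand of any decomposition is recovered by multiplying with c i.\<close>
lemma orthogonal_idempotents_internal_dsum:
  fixes c :: "'i \<Rightarrow> 'a::ring_1"
  assumes fin: "finite I" and idem: "\<And>i. i \<in> I \<Longrightarrow> c i * c i = c i"
    and orth: "\<And>i j. i \<in> I \<Longrightarrow> j \<in> I \<Longrightarrow> i \<noteq> j \<Longrightarrow> c i * c j = 0"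
    and one: "sum c I = 1"
  shows "is_internal_dsum I (\<lambda>i. range ((*) (c i))) UNIV"
proof -
  have component: "c i * sum f {j. f j \<noteq> 0} = f i"
    if d: "decomp I (\<lambda>i. range ((*) (c i))) f" and i: "i \<in> I" for f i
  proof -
    have "c i * f j = (if i = j then f j else 0)" if "f j \<noteq> 0" for j
    proof -
      have j: "j \<in> I" using d that by (auto simp: decomp_def)
      then show ?thesis
        using d idem[OF j] orth[OF i j] unfolding decomp_def by (auto simp: mult.assoc[symmetric])
    qed
    then have "c i * sum f {j. f j \<noteq> 0} = (\<Sum>j\<in>{j. f j \<noteq> 0}. if i = j then f j else 0)"
      unfolding sum_distrib_left by (intro sum.cong) auto
    also have "\<dots> = f i" using d by (simp add: decomp_def)
    finally show ?thesis .
  qed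
  have "x \<in> dsum_set I (\<lambda>i. range ((*) (c i)))" for x
  proof -
    have "(\<Sum>i\<in>I. c i * x) \<in> dsum_set I (\<lambda>i. range ((*) (c i)))"
      by (rule dsum_setI) (use fin in \<open>auto simp: image_iff intro: exI[of _ 0]\<close>)
    then show ?thesis by (simp add: sum_distrib_right[symmetric] one)
  qed
  moreover have "f = f'" if d: "decomp I (\<lambda>i. range ((*) (c i))) f" "decomp I (\<lambda>i. range ((*) (c i))) f'"
    and eq: "sum f {i. f i \<noteq> 0} = sum f' {i. f' i \<noteq> 0}" for f f'
  proof
    fix i
    show "f i = f' i"
      using component[OF d(1)] component[OF d(2)] d eq by (cases "i \<in> I") (auto simp: decomp_def)
  qed
  ultimately show ?thesis unfolding is_internal_dsum_def by blast
qed

lemma orthogonal_central_idempotents_complement: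
  fixes E :: "'a::ring_1 set"
  assumes fin: "finite E" and idem: "\<forall>r\<in>E. r * r = r \<and> central r"
    and orth: "\<forall>r\<in>E. \<forall>s\<in>E. r \<noteq> s \<longrightarrow> r * s = 0"
    and e': "e' = 1 - (\<Sum>r\<in>E. r)"
  shows "e' * e' = e'" "central e'" "\<And>r. r \<in> E \<Longrightarrow> r * e' = 0 \<and> e' * r = 0"
    and "is_internal_dsum (Some ` E \<union> {None})
           (\<lambda>i. case i of None \<Rightarrow> range ((*) e') | Some r \<Rightarrow> range ((*) r)) UNIV"
proof -
  define T where "T = (\<Sum>r\<in>E. r)"
  have rT: "r * T = r" "T * r = r" if "r \<in> E" for r
  proof -
    have "r * s = (if s = r then r else 0)" "s * r = (if s = r then r else 0)" if "s \<in> E" for s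
      using \<open>r \<in> E\<close> that orth idem by auto
    then show "r * T = r" "T * r = r"
      using fin \<open>r \<in> E\<close> by (simp_all add: T_def sum_distrib_left sum_distrib_right)
  qed
  have TT: "T * T = T"
  proof -
    have "T * T = (\<Sum>r\<in>E. r * T)" by (simp add: T_def sum_distrib_right)
    also have "\<dots> = T" using rT(1) by (simp add: T_def[symmetric])
    finally show ?thesis .
  qed
  have Tc: "T * y = y * T" for y
    unfolding T_def sum_distrib_left sum_distrib_right using idem by (intro sum.cong) (auto simp: central_def)
  have e'T: "e' = 1 - T" by (simp add: e' T_def)
  show idem': "e' * e' = e'" by (simp add: e'T algebra_simps TT)
  show "central e'" by (simp add: central_def e'T algebra_simps Tc)
  show orth': "r * e' = 0 \<and> e' * r = 0" if "r \<in> E" for r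
    using rT[OF that] by (simp add: e'T algebra_simps)
  define c where "c i = (case i of None \<Rightarrow> e' | Some r \<Rightarrow> r)" for i
  have "(\<lambda>i. range ((*) (c i))) = (\<lambda>i. case i of None \<Rightarrow> range ((*) e') | Some r \<Rightarrow> range ((*) r))"
    by (simp add: c_def fun_eq_iff split: option.split)
  moreover have "is_internal_dsum (Some ` E \<union> {None}) (\<lambda>i. range ((*) (c i))) UNIV"
  proof (rule orthogonal_idempotents_internal_dsum)
    show "finite (Some ` E \<union> {None})" using fin by simp
    show "c i * c i = c i" if "i \<in> Some ` E \<union> {None}" for i
      using that idem idem' by (auto simp: c_def)
    show "c i * c j = 0" if "i \<in> Some ` E \<union> {None}" "j \<in> Some ` E \<union> {None}" "i \<noteq> j" for i j
      using that orth orth' by (auto simp: c_def) (meson orth)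
    show "sum c (Some ` E \<union> {None}) = 1"
      using fin by (simp add: c_def e' sum.reindex)
  qed
  ultimately show "is_internal_dsum (Some ` E \<union> {None})
      (\<lambda>i. case i of None \<Rightarrow> range ((*) e') | Some r \<Rightarrow> range ((*) r)) UNIV"
    by simp
qed

locale group_graded_ring = group G for G :: "('g, 'b) monoid_scheme" (structure) +
  fixes Sg :: "'g \<Rightarrow> 'a::ring_1 set"
  assumes graded: "graded_ring G Sg UNIV 1"
begin

lemma add_subgroup_component: "g \<in> carrier G \<Longrightarrow> add_subgroup (Sg g)"
  using graded by (simp add: graded_ring_def)

lemma zero_in_component: "g \<in> carrier G \<Longrightarrow> 0 \<in> Sg g"
  by (simp add: add_subgroup_component add_subgroup_zero)

lemma component_mult:
  "g \<in> carrier G \<Longrightarrow> h \<in> carrier G \<Longrightarrow> x \<in> Sg g \<Longrightarrow> y \<in> Sg h \<Longrightarrow> x * y \<in> Sg (g \<otimes> h)"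
  using graded by (simp add: graded_ring_def)

lemma unit_component_mult: "x \<in> Sg \<one> \<Longrightarrow> y \<in> Sg \<one> \<Longrightarrow> x * y \<in> Sg \<one>"
  using component_mult[of \<one> \<one> x y] by simp

lemma unit_component_left_mult: "g \<in> carrier G \<Longrightarrow> a \<in> Sg \<one> \<Longrightarrow> s \<in> Sg g \<Longrightarrow> a * s \<in> Sg g"
  using component_mult[of \<one> g a s] by simp

lemma unit_component_right_mult: "g \<in> carrier G \<Longrightarrow> a \<in> Sg \<one> \<Longrightarrow> s \<in> Sg g \<Longrightarrow> s * a \<in> Sg g"
  using component_mult[of g \<one> s a] by simp

lemma homogeneous_decomposition:
  obtains f where "decomp (carrier G) Sg f" "x = sum f {i. f i \<noteq> 0}"
  using graded unfolding graded_ring_def is_internal_dsum_def dsum_set_def by blast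

lemma decomp_unique:
  "decomp (carrier G) Sg f \<Longrightarrow> decomp (carrier G) Sg f' \<Longrightarrow>
    sum f {i. f i \<noteq> 0} = sum f' {i. f' i \<noteq> 0} \<Longrightarrow> f = f'"
  using graded by (simp add: graded_ring_def is_internal_dsum_def)

lemma decomp_subgroup_imp_decomp:
  assumes "H \<subseteq> carrier G" "\<And>i. i \<in> H \<Longrightarrow> X i \<subseteq> Sg i" "decomp H X f"
  shows "decomp (carrier G) Sg f"
  using assms zero_in_component unfolding decomp_def by (metis subset_iff)

text \<open>Uniqueness of decompositions is inherited from the grading of the whole ring.\<close>
lemma graded_ring_subgroupI:
  assumes H: "subgroup H G" and sub: "\<And>g. g \<in> H \<Longrightarrow> X g \<subseteq> Sg g"
    and add: "\<And>g. g \<in> H \<Longrightarrow> add_subgroup (X g)"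
    and mult: "\<And>g h x y. g \<in> H \<Longrightarrow> h \<in> H \<Longrightarrow> x \<in> X g \<Longrightarrow> y \<in> X h \<Longrightarrow> x * y \<in> X (g \<otimes> h)"
    and A: "unital_subring A u" "A = dsum_set H X"
  shows "graded_ring (G\<lparr>carrier := H\<rparr>) X A u"
proof -
  have "f = f'" if "decomp H X f" "decomp H X f'" "sum f {i. f i \<noteq> 0} = sum f' {i. f' i \<noteq> 0}"
    for f f'
    using decomp_unique decomp_subgroup_imp_decomp[OF subgroup.subset[OF H] sub] that by blast
  then show ?thesis
    unfolding graded_ring_def is_internal_dsum_def
    using subgroup.subgroup_is_group[OF H is_group] add mult A by auto
qed

lemma subgroup_subring_graded:
  assumes H: "subgroup H G" and one: "1 \<in> Sg \<one>"
  shows "graded_ring (G\<lparr>carrier := H\<rparr>) Sg (dsum_set H Sg) 1"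
proof (rule graded_ring_subgroupI[OF H])
  have HG: "H \<subseteq> carrier G" by (rule subgroup.subset[OF H])
  then have zero: "\<And>g. g \<in> H \<Longrightarrow> 0 \<in> Sg g" and add: "\<And>g. g \<in> H \<Longrightarrow> add_subgroup (Sg g)"
    by (auto intro: zero_in_component add_subgroup_component)
  have homogeneous: "s \<in> dsum_set H Sg" if "g \<in> H" "s \<in> Sg g" for g s
    using dsum_setI[of H Sg "{g}" "\<lambda>_. s"] zero that by simp
  have dsum: "add_subgroup (dsum_set H Sg)" by (rule add_subgroup_dsum_set[OF add])
  have "x * y \<in> dsum_set H Sg" if x: "x \<in> dsum_set H Sg" and y: "y \<in> dsum_set H Sg" for x y
  proof -
    obtain F f where F: "finite F" "F \<subseteq> H" "\<forall>i\<in>F. f i \<in> Sg i" "x = sum f F"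
      using x by (rule dsum_setE)
    obtain F' f' where F': "finite F'" "F' \<subseteq> H" "\<forall>i\<in>F'. f' i \<in> Sg i" "y = sum f' F'"
      using y by (rule dsum_setE)
    have "x * y = (\<Sum>i\<in>F. \<Sum>j\<in>F'. f i * f' j)" by (simp add: F(4) F'(4) sum_product)
    also have "\<dots> \<in> dsum_set H Sg"
    proof (intro add_subgroup_sum[OF dsum])
      fix i j assume "i \<in> F" "j \<in> F'"
      then show "f i * f' j \<in> dsum_set H Sg"
        using F F' HG subgroup.m_closed[OF H, of i j] by (intro homogeneous[of "i \<otimes> j"] component_mult) auto
    qed
    finally show ?thesis .
  qed
  moreover have "1 \<in> dsum_set H Sg" by (rule homogeneous[OF subgroup.one_closed[OF H] one])
  ultimately show "unital_subring (dsum_set H Sg) 1"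
    using dsum unfolding unital_subring_def by simp
  show "x * y \<in> Sg (g \<otimes> h)" if "g \<in> H" "h \<in> H" "x \<in> Sg g" "y \<in> Sg h" for g h x y
    using that HG by (intro component_mult) auto
  show "add_subgroup (Sg g)" if "g \<in> H" for g using add[OF that] .
qed simp_all

lemma corner_graded:
  assumes c: "central c" "c * c = c" "\<And>g s. g \<in> carrier G \<Longrightarrow> s \<in> Sg g \<Longrightarrow> c * s \<in> Sg g"
    and H: "subgroup H G"
    and kill: "\<And>g s. g \<in> carrier G \<Longrightarrow> g \<notin> H \<Longrightarrow> s \<in> Sg g \<Longrightarrow> c * s = 0"
  shows "graded_ring (G\<lparr>carrier := H\<rparr>) (\<lambda>g. (*) c ` Sg g) (range ((*) c)) c"
proof (rule graded_ring_subgroupI[OF H])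
  have HG: "H \<subseteq> carrier G" by (rule subgroup.subset[OF H])
  have zero: "0 \<in> (*) c ` Sg g" if "g \<in> H" for g
    using that HG zero_in_component[of g] by (auto simp: image_iff intro!: bexI[of _ 0])
  show "range ((*) c) = dsum_set H (\<lambda>g. (*) c ` Sg g)"
  proof (intro equalityI subsetI)
    fix y assume "y \<in> range ((*) c)"
    then obtain x where y: "y = c * x" by blast
    obtain f where f: "decomp (carrier G) Sg f" "x = sum f {i. f i \<noteq> 0}"
      by (rule homogeneous_decomposition)
    let ?F = "{i. f i \<noteq> 0} \<inter> H"
    have "y = (\<Sum>i\<in>{i. f i \<noteq> 0}. c * f i)" by (simp add: y f(2) sum_distrib_left)
    also have "\<dots> = (\<Sum>i\<in>?F. c * f i)"
      using f(1) kill by (intro sum.mono_neutral_right) (auto simp: decomp_def)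
    also have "\<dots> \<in> dsum_set H (\<lambda>g. (*) c ` Sg g)"
      using f(1) by (intro dsum_setI zero) (auto simp: decomp_def)
    finally show "y \<in> dsum_set H (\<lambda>g. (*) c ` Sg g)" .
  next
    fix y assume "y \<in> dsum_set H (\<lambda>g. (*) c ` Sg g)"
    then obtain F f where F: "finite F" "F \<subseteq> H" "\<forall>i\<in>F. f i \<in> (*) c ` Sg i" "y = sum f F"
      by (rule dsum_setE)
    have "c * y = y"
      using F c(2) by (auto simp: sum_distrib_left mult.assoc[symmetric] intro!: sum.cong)
    then show "y \<in> range ((*) c)" by (metis rangeI)
  qed
  show "x * y \<in> (*) c ` Sg (g \<otimes> h)"
    if gh: "g \<in> H" "h \<in> H" and xy: "x \<in> (*) c ` Sg g" "y \<in> (*) c ` Sg h" for g h x y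
  proof -
    obtain a b where "a \<in> Sg g" "b \<in> Sg h" "x * y = c * (a * b)"
      using xy central_idempotent_mult_mult[OF c(1,2)] by blast
    then show ?thesis using gh HG by (auto intro!: component_mult)
  qed
  show "(*) c ` Sg g \<subseteq> Sg g" if "g \<in> H" for g
    using that HG c(3) by blast
  show "add_subgroup ((*) c ` Sg g)" if "g \<in> H" for g
    using that HG by (intro add_subgroup_left_mult_image add_subgroup_component) auto
qed (rule unital_subring_corner[OF c(1,2)])

end

locale eps_graded_ring = group G for G :: "('g, 'b) monoid_scheme" (structure) +
  fixes Sg :: "'g \<Rightarrow> 'a::ring_1 set" and eps :: "'g \<Rightarrow> 'a"
  assumes eps_strong: "eps_strongly_graded G Sg UNIV 1 eps"

lemma eps_graded_ringI: "eps_strongly_graded G Sg UNIV 1 eps \<Longrightarrow> eps_graded_ring G Sg eps"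
  by (simp add: eps_graded_ring_def eps_graded_ring_axioms_def eps_strongly_graded_def graded_ring_def)

sublocale eps_graded_ring \<subseteq> group_graded_ring
  using eps_strong by unfold_locales (simp add: eps_strongly_graded_def)

context eps_graded_ring
begin

lemma eps_in_sumprods: "g \<in> carrier G \<Longrightarrow> eps g \<in> sumprods (Sg g) (Sg (inv g))"
  using eps_strong by (simp add: eps_strongly_graded_def)

lemma eps_left_unit: "g \<in> carrier G \<Longrightarrow> s \<in> Sg g \<Longrightarrow> eps g * s = s"
  using eps_strong by (simp add: eps_strongly_graded_def)

lemma eps_inv_right_unit: "g \<in> carrier G \<Longrightarrow> s \<in> Sg g \<Longrightarrow> s * eps (inv g) = s"
  using eps_strong by (simp add: eps_strongly_graded_def)

lemma eps_right_unit: "g \<in> carrier G \<Longrightarrow> s \<in> Sg (inv g) \<Longrightarrow> s * eps g = s"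
  using eps_inv_right_unit[of "inv g" s] by simp

lemma eps_in_unit_component: "g \<in> carrier G \<Longrightarrow> eps g \<in> Sg \<one>"
  using eps_in_sumprods sumprods_subset[OF add_subgroup_component[of \<one>]] component_mult[of g "inv g"]
  by (metis inv_closed one_closed r_inv subsetD)

lemma eps_idem: "g \<in> carrier G \<Longrightarrow> eps g * eps g = eps g"
  using sumprods_left_mult_eq[OF eps_in_sumprods, of g "eps g" 1] eps_left_unit by simp

text \<open>Both a eps g and eps g a lie in S_g S_{g^-1}, on which eps g acts as a two-sided unit.\<close>
lemma eps_commute:
  assumes g: "g \<in> carrier G" and a: "a \<in> Sg \<one>"
  shows "a * eps g = eps g * a"
proof -
  have "a * eps g \<in> sumprods (Sg g) (Sg (inv g))"
    by (rule sumprods_left_mult[OF eps_in_sumprods[OF g]]) (rule unit_component_left_mult[OF g a])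
  then have "eps g * (a * eps g) = a * eps g"
    using sumprods_left_mult_eq[of _ "Sg g" _ "eps g" 1] eps_left_unit[OF g] by simp
  moreover have "eps g * a \<in> sumprods (Sg g) (Sg (inv g))"
    using g by (intro sumprods_right_mult[OF eps_in_sumprods[OF g]] unit_component_right_mult a) auto
  then have "(eps g * a) * eps g = eps g * a"
    using sumprods_right_mult_eq[of _ _ "Sg (inv g)" "eps g" 1] eps_right_unit[OF g] by simp
  ultimately show ?thesis by (simp add: mult.assoc)
qed

lemma eps_shift:
  assumes g: "g \<in> carrier G" and h: "h \<in> carrier G" and s: "s \<in> Sg g"
  shows "s * eps h = eps (g \<otimes> h) * s"
proof -
  have gh: "g \<otimes> h \<in> carrier G" using g h by simp
  have "s * eps h \<in> sumprods (Sg (g \<otimes> h)) (Sg (inv h))"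
    by (rule sumprods_left_mult[OF eps_in_sumprods[OF h]]) (rule component_mult[OF g h s])
  then have "eps (g \<otimes> h) * (s * eps h) = s * eps h"
    using sumprods_left_mult_eq[of _ "Sg (g \<otimes> h)" _ "eps (g \<otimes> h)" 1] eps_left_unit[OF gh] by simp
  moreover have "eps (g \<otimes> h) * s \<in> sumprods (Sg (g \<otimes> h)) (Sg (inv h))"
  proof (rule sumprods_right_mult[OF eps_in_sumprods[OF gh]])
    fix b assume "b \<in> Sg (inv (g \<otimes> h))"
    then have "b * s \<in> Sg (inv (g \<otimes> h) \<otimes> g)" using component_mult[OF _ g _ s] gh by simp
    also have "inv (g \<otimes> h) \<otimes> g = inv h" using g h by (simp add: inv_mult_group m_assoc)
    finally show "b * s \<in> Sg (inv h)" .
  qed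
  then have "(eps (g \<otimes> h) * s) * eps h = eps (g \<otimes> h) * s"
    using sumprods_right_mult_eq[of _ _ "Sg (inv h)" "eps h" 1] eps_right_unit[OF h] by simp
  ultimately show ?thesis by (simp add: mult.assoc)
qed

definition eps_prod :: "'g list \<Rightarrow> 'a" where
  "eps_prod hs = prod_list (map eps hs)"

lemma eps_prod_simps [simp]: "eps_prod [] = 1" "eps_prod (h # hs) = eps h * eps_prod hs"
  by (simp_all add: eps_prod_def)

lemma eps_prod_in_unit_component: "hs \<noteq> [] \<Longrightarrow> set hs \<subseteq> carrier G \<Longrightarrow> eps_prod hs \<in> Sg \<one>"
proof (induction hs)
  case (Cons h hs)
  then show ?case
    by (cases "hs = []") (simp_all add: eps_in_unit_component unit_component_mult)
qed simp

lemma eps_prod_commute: "set hs \<subseteq> carrier G \<Longrightarrow> a \<in> Sg \<one> \<Longrightarrow> a * eps_prod hs = eps_prod hs * a"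
  by (induction hs) (simp_all add: eps_commute mult.assoc flip: mult.assoc[of a])

lemma eps_prod_idem: "set hs \<subseteq> carrier G \<Longrightarrow> eps_prod hs * eps_prod hs = eps_prod hs"
proof (induction hs)
  case (Cons h hs)
  have "eps h * eps_prod hs * (eps h * eps_prod hs) = (eps h * eps h) * (eps_prod hs * eps_prod hs)"
    using Cons.prems eps_prod_commute[of hs "eps h"] eps_in_unit_component[of h]
    by (simp add: mult.assoc) (metis mult.assoc)
  then show ?case using Cons by (simp add: eps_idem)
qed simp

lemma eps_prod_shift:
  "g \<in> carrier G \<Longrightarrow> s \<in> Sg g \<Longrightarrow> set hs \<subseteq> carrier G \<Longrightarrow>
    s * eps_prod hs = eps_prod (map ((\<otimes>) g) hs) * s"
  by (induction hs) (simp_all add: eps_shift mult.assoc flip: mult.assoc[of s])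

lemma eps_prod_absorb: "(\<And>h. h \<in> set hs \<Longrightarrow> r * eps h = r) \<Longrightarrow> r * eps_prod hs = r"
  by (induction hs) (simp_all add: mult.assoc[symmetric])

lemma eps_prod_mult_factor:
  "set hs \<subseteq> carrier G \<Longrightarrow> h \<in> set hs \<Longrightarrow> eps_prod hs * eps h = eps_prod hs"
proof (induction hs)
  case (Cons k hs)
  show ?case
  proof (cases "k = h")
    case True
    then have "eps k * eps_prod hs * eps h = eps h * eps h * eps_prod hs"
      using Cons.prems eps_prod_commute[of hs "eps h"] eps_in_unit_component[of h]
      by (simp add: mult.assoc) (metis mult.assoc)
    then show ?thesis using Cons.prems True by (simp add: eps_idem)
  qed (use Cons in \<open>simp add: mult.assoc\<close>)
qed simp

lemma BsemiE:
  assumes "b \<in> Bsemi G eps"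
  obtains hs where "hs \<noteq> []" "set hs \<subseteq> carrier G" "b = eps_prod hs"
  using assms unfolding Bsemi_def eps_prod_def by blast

lemma Bsemi_in_unit_component: "b \<in> Bsemi G eps \<Longrightarrow> b \<in> Sg \<one>"
  by (auto elim: BsemiE intro: eps_prod_in_unit_component)

lemma Bsemi_commute: "b \<in> Bsemi G eps \<Longrightarrow> a \<in> Sg \<one> \<Longrightarrow> a * b = b * a"
  by (auto elim!: BsemiE intro: eps_prod_commute)

lemma Bsemi_idem: "b \<in> Bsemi G eps \<Longrightarrow> b * b = b"
  by (auto elim!: BsemiE intro: eps_prod_idem)

lemma Bsemi_mult:
  assumes "b \<in> Bsemi G eps" "b' \<in> Bsemi G eps"
  shows "b * b' \<in> Bsemi G eps"
proof -
  obtain hs hs' where "b = prod_list (map eps hs)" "b' = prod_list (map eps hs')"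
    "hs \<noteq> []" "set hs \<subseteq> carrier G" "set hs' \<subseteq> carrier G"
    using assms unfolding Bsemi_def by blast
  then show ?thesis unfolding Bsemi_def by (auto intro!: exI[of _ "hs @ hs'"])
qed

lemma eps_in_Bsemi: "g \<in> carrier G \<Longrightarrow> eps g \<in> Bsemi G eps"
  unfolding Bsemi_def by (auto intro!: exI[of _ "[g]"])

lemma minimal_B_in_Bsemi: "minimal_B G eps r \<Longrightarrow> r \<in> Bsemi G eps"
  and minimal_B_nonzero: "minimal_B G eps r \<Longrightarrow> r \<noteq> 0"
  by (simp_all add: minimal_B_def Bstar_def)

lemma minimal_B_mult:
  assumes r: "minimal_B G eps r" and b: "b \<in> Bsemi G eps"
  shows "r * b = 0 \<or> r * b = r"
proof -
  have rb: "r * b \<in> Bsemi G eps" using Bsemi_mult[OF minimal_B_in_Bsemi[OF r] b] .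
  have "r * b = (r * b) * r"
    using Bsemi_commute[OF minimal_B_in_Bsemi[OF r] Bsemi_in_unit_component[OF b]]
      Bsemi_idem[OF minimal_B_in_Bsemi[OF r]]
    by (metis mult.assoc)
  moreover have "\<forall>b\<in>Bstar G eps. b = b * r \<longrightarrow> b = r" using r by (simp add: minimal_B_def)
  ultimately show ?thesis using rb by (auto simp: Bstar_def)
qed

lemma minimal_B_orthogonal:
  assumes r: "minimal_B G eps r" and s: "minimal_B G eps s" and "r \<noteq> s"
  shows "r * s = 0"
proof (rule ccontr)
  assume "r * s \<noteq> 0"
  moreover have "r * s = s * r"
    using Bsemi_commute[OF minimal_B_in_Bsemi[OF s] Bsemi_in_unit_component[OF minimal_B_in_Bsemi[OF r]]] .
  ultimately have "r * s = r" "s * r = s"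
    using minimal_B_mult[OF r minimal_B_in_Bsemi[OF s]] minimal_B_mult[OF s minimal_B_in_Bsemi[OF r]]
    by auto
  with \<open>r * s = s * r\<close> \<open>r \<noteq> s\<close> show False by simp
qed

lemma minimal_B_annihilates:
  assumes r: "minimal_B G eps r" and g: "g \<in> carrier G" "g \<notin> Nset G eps r" and s: "s \<in> Sg g"
  shows "r * s = 0"
proof -
  have "r * eps g = 0" using minimal_B_mult[OF r eps_in_Bsemi[OF g(1)]] g by (auto simp: Nset_def)
  then show ?thesis using eps_left_unit[OF g(1) s] by (metis mult.assoc mult_zero_left)
qed

lemma stabilizer_shift:
  assumes hs: "set hs \<subseteq> carrier G" and r: "r = eps_prod hs"
    and N: "subgroup (Nset G eps r) G" and k: "k \<in> Nset G eps r"
  shows "r * eps_prod (map ((\<otimes>) k) hs) = r"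
proof (rule eps_prod_absorb)
  fix h assume "h \<in> set (map ((\<otimes>) k) hs)"
  then obtain h' where "h' \<in> set hs" "h = k \<otimes> h'" by auto
  moreover have "h' \<in> Nset G eps r" if "h' \<in> set hs" for h'
    using that hs eps_prod_mult_factor[OF hs that] by (auto simp: Nset_def r)
  ultimately have "h \<in> Nset G eps r" using k subgroup.m_closed[OF N] by blast
  then show "r * eps h = r" by (simp add: Nset_def)
qed

text \<open>For s of degree g in the stabilizer N, the conjugate p of r with s r = p s satisfies
  r p = r; the defect q = p - r p is killed by S_{g^-1}, hence by eps g, hence q s = 0.\<close>
lemma minimal_B_commute_stabilized:
  assumes r: "minimal_B G eps r" and N: "subgroup (Nset G eps r) G"
    and g: "g \<in> Nset G eps r" and s: "s \<in> Sg g"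
  shows "r * s = s * r"
proof -
  have gG: "g \<in> carrier G" "inv g \<in> carrier G" using g by (auto simp: Nset_def)
  have r_unit: "r \<in> Sg \<one>" by (rule Bsemi_in_unit_component[OF minimal_B_in_Bsemi[OF r]])
  obtain hs where hs: "hs \<noteq> []" "set hs \<subseteq> carrier G" "r = eps_prod hs"
    using minimal_B_in_Bsemi[OF r] by (rule BsemiE)
  define p where "p = eps_prod (map ((\<otimes>) g) hs)"
  define p' where "p' = eps_prod (map ((\<otimes>) (inv g)) hs)"
  have p_unit: "p \<in> Sg \<one>" "p' \<in> Sg \<one>"
    using hs gG by (auto simp: p_def p'_def subset_iff intro!: eps_prod_in_unit_component)
  have sr: "s * r = p * s" using eps_prod_shift[OF gG(1) s hs(2)] hs(3) by (simp add: p_def)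
  have rp: "r * p = r" "r * p' = r"
    using stabilizer_shift[OF hs(2,3) N] g subgroup.m_inv_closed[OF N g] by (simp_all add: p_def p'_def)
  have p'r: "p' * r = r" using rp(2) eps_prod_commute[OF _ p_unit(2)] hs by (simp add: p'_def)
  have "t * (p - r * p) = 0" if t: "t \<in> Sg (inv g)" for t
  proof -
    have "map ((\<otimes>) (inv g)) (map ((\<otimes>) g) hs) = hs"
      using hs(2) gG by (induction hs) (auto simp: m_assoc[symmetric])
    then have tp: "t * p = r * t"
      using eps_prod_shift[OF gG(2) t, of "map ((\<otimes>) g) hs"] hs gG by (auto simp: p_def)
    have tr: "t * r = p' * t" using eps_prod_shift[OF gG(2) t hs(2)] hs(3) by (simp add: p'_def)
    have "t * (p - r * p) = t * p - (t * r) * p" by (simp add: right_diff_distrib mult.assoc)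
    also have "\<dots> = r * t - p' * t * p" by (simp add: tp tr)
    also have "\<dots> = r * t - p' * (r * t)" by (simp add: tp mult.assoc)
    also have "\<dots> = 0" by (simp add: p'r mult.assoc[symmetric])
    finally show ?thesis .
  qed
  then have "eps g * (p - r * p) = 0"
    using sumprods_right_mult_eq[OF eps_in_sumprods[OF gG(1)], of "p - r * p" 0] by simp
  moreover have "p - r * p \<in> Sg \<one>"
    using p_unit r_unit by (intro add_subgroup_diff[OF add_subgroup_component] unit_component_mult) auto
  ultimately have "(p - r * p) * s = 0"
    using eps_commute[OF gG(1)] eps_left_unit[OF gG(1) s] by (metis mult.assoc mult_zero_left)
  then show ?thesis using sr rp(1) by (simp add: left_diff_distrib mult.assoc[symmetric])
qed

lemma minimal_B_commute_homogeneous: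
  assumes r: "minimal_B G eps r" and N: "subgroup (Nset G eps r) G"
    and g: "g \<in> carrier G" and s: "s \<in> Sg g"
  shows "r * s = s * r"
proof (cases "g \<in> Nset G eps r")
  case False
  then have "inv g \<notin> Nset G eps r" using subgroup.m_inv_closed[OF N] g by fastforce
  then have "s * r = s * (r * eps (inv g))"
    using eps_inv_right_unit[OF g s] eps_commute[OF _ Bsemi_in_unit_component[OF minimal_B_in_Bsemi[OF r]]]
      g by (metis inv_closed mult.assoc)
  also have "r * eps (inv g) = 0"
    using \<open>inv g \<notin> Nset G eps r\<close> minimal_B_mult[OF r eps_in_Bsemi] g by (auto simp: Nset_def)
  finally show ?thesis using minimal_B_annihilates[OF r g False s] by simp
qed (rule minimal_B_commute_stabilized[OF r N _ s])

lemma eps_central_central: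
  assumes "eps_central G eps r"
  shows "central r"
  unfolding central_def
proof
  fix x
  obtain f where f: "decomp (carrier G) Sg f" "x = sum f {i. f i \<noteq> 0}"
    by (rule homogeneous_decomposition)
  have "r * f i = f i * r" if "f i \<noteq> 0" for i
    using assms f(1) that
    by (intro minimal_B_commute_homogeneous[of r i]) (auto simp: eps_central_def decomp_def)
  then have "(\<Sum>i\<in>{i. f i \<noteq> 0}. r * f i) = (\<Sum>i\<in>{i. f i \<noteq> 0}. f i * r)"
    by (intro sum.cong) auto
  then show "r * x = x * r" by (simp only: f(2) sum_distrib_left sum_distrib_right)
qed

lemma eps_central_idem: "eps_central G eps r \<Longrightarrow> r * r = r"
  by (simp add: eps_central_def minimal_B_in_Bsemi Bsemi_idem)

text \<open>If c eps g = c, then c S_{gh} = c eps g S_{gh} lies in c S_g c S_h, because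
  eps g lies in S_g S_{g^-1} and S_{g^-1} S_{gh} lies in S_h.\<close>
lemma corner_sumprods_components:
  assumes c: "central c" "c * c = c" and g: "g \<in> carrier G" and h: "h \<in> carrier G"
    and ceps: "c * eps g = c"
  shows "sumprods ((*) c ` Sg g) ((*) c ` Sg h) = (*) c ` Sg (g \<otimes> h)"
proof
  note cc = central_idempotent_mult_mult[OF c]
  show "sumprods ((*) c ` Sg g) ((*) c ` Sg h) \<subseteq> (*) c ` Sg (g \<otimes> h)"
    using g h cc component_mult
    by (intro sumprods_subset add_subgroup_left_mult_image add_subgroup_component) auto
  show "(*) c ` Sg (g \<otimes> h) \<subseteq> sumprods ((*) c ` Sg g) ((*) c ` Sg h)"
  proof
    fix y assume "y \<in> (*) c ` Sg (g \<otimes> h)"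
    then obtain x where x: "x \<in> Sg (g \<otimes> h)" "y = c * x" by blast
    obtain n :: nat and a b where ab: "\<forall>i<n. a i \<in> Sg g" "\<forall>i<n. b i \<in> Sg (inv g)"
      "eps g = (\<Sum>i<n. a i * b i)"
      using eps_in_sumprods[OF g] by (rule sumprodsE)
    have bx: "b i * x \<in> Sg h" if "i < n" for i
      using component_mult[OF _ _ ab(2)[rule_format, OF that] x(1)] g h by (simp add: m_assoc[symmetric])
    have "y = c * eps g * x" using ceps x(2) by simp
    also have "\<dots> = (\<Sum>i<n. c * (a i * (b i * x)))"
      by (simp add: ab(3) sum_distrib_left sum_distrib_right mult.assoc)
    also have "\<dots> = (\<Sum>i<n. (c * a i) * (c * (b i * x)))" by (simp add: cc)
    finally show "y \<in> sumprods ((*) c ` Sg g) ((*) c ` Sg h)"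
      using ab(1) bx by (auto intro!: sumprodsI)
  qed
qed

lemma corner_eps_strongly_graded:
  assumes c: "central c" "c * c = c" "\<And>g s. g \<in> carrier G \<Longrightarrow> s \<in> Sg g \<Longrightarrow> c * s \<in> Sg g"
  shows "eps_strongly_graded G (\<lambda>g. (*) c ` Sg g) (range ((*) c)) c (\<lambda>g. c * eps g)"
  unfolding eps_strongly_graded_def
proof (intro conjI ballI)
  note cc = central_idempotent_mult_mult[OF c(1,2)]
  show "graded_ring G (\<lambda>g. (*) c ` Sg g) (range ((*) c)) c"
    using corner_graded[OF c subgroup_self] by simp
  fix g assume g: "g \<in> carrier G"
  obtain n :: nat and a b where ab: "\<forall>i<n. a i \<in> Sg g" "\<forall>i<n. b i \<in> Sg (inv g)"
    "eps g = (\<Sum>i<n. a i * b i)"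
    using eps_in_sumprods[OF g] by (rule sumprodsE)
  have "c * eps g = (\<Sum>i<n. (c * a i) * (c * b i))" by (simp add: ab(3) cc sum_distrib_left)
  then show "c * eps g \<in> sumprods ((*) c ` Sg g) ((*) c ` Sg (inv g))"
    using ab by (auto intro!: sumprodsI)
  fix s assume "s \<in> (*) c ` Sg g"
  then obtain y where "y \<in> Sg g" "s = c * y" by blast
  then show "c * eps g * s = s" "s * (c * eps (inv g)) = s"
    by (simp_all add: cc eps_left_unit[OF g] eps_inv_right_unit[OF g])
qed

lemma eps_central_corner_strongly_graded:
  assumes r: "eps_central G eps r"
  shows "strongly_graded_ring (G\<lparr>carrier := Nset G eps r\<rparr>) (\<lambda>g. (*) r ` Sg g) (range ((*) r)) r"
proof -
  have m: "minimal_B G eps r" and N: "subgroup (Nset G eps r) G"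
    using r by (simp_all add: eps_central_def)
  have c: "central r" "r * r = r" "r \<in> Sg \<one>"
    using eps_central_central[OF r] eps_central_idem[OF r]
      Bsemi_in_unit_component[OF minimal_B_in_Bsemi[OF m]] by auto
  have "graded_ring (G\<lparr>carrier := Nset G eps r\<rparr>) (\<lambda>g. (*) r ` Sg g) (range ((*) r)) r"
    using c(3) by (intro corner_graded[OF c(1,2) _ N minimal_B_annihilates[OF m]] unit_component_left_mult)
  moreover have "sumprods ((*) r ` Sg g) ((*) r ` Sg h) = (*) r ` Sg (g \<otimes> h)"
    if "g \<in> Nset G eps r" "h \<in> Nset G eps r" for g h
    using that by (intro corner_sumprods_components[OF c(1,2)]) (auto simp: Nset_def)
  ultimately show ?thesis by (simp add: strongly_graded_ring_def)
qed

text \<open>A summand f of an orthogonal decomposition of r satisfies f = f r, so f = r by minimality;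
  two summands then give r = r r = 0.\<close>
lemma minimal_B_not_orthogonal_sum:
  assumes r: "minimal_B G eps r"
  shows "\<not> (\<exists>fs. length fs \<ge> 2 \<and> set fs \<subseteq> Bstar G eps \<and>
                 (\<forall>i<length fs. \<forall>j<length fs. i \<noteq> j \<longrightarrow> fs ! i * fs ! j = 0) \<and>
                 r = sum_list fs)"
proof
  assume "\<exists>fs. length fs \<ge> 2 \<and> set fs \<subseteq> Bstar G eps \<and>
                 (\<forall>i<length fs. \<forall>j<length fs. i \<noteq> j \<longrightarrow> fs ! i * fs ! j = 0) \<and> r = sum_list fs"
  then obtain fs where fs: "length fs \<ge> 2" "set fs \<subseteq> Bstar G eps"
    "\<forall>i<length fs. \<forall>j<length fs. i \<noteq> j \<longrightarrow> fs ! i * fs ! j = 0" "r = sum_list fs" by blast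
  have summand: "fs ! k = r" if k: "k < length fs" for k
  proof -
    have B: "fs ! k \<in> Bstar G eps" using fs(2) k by auto
    then have idem: "fs ! k * fs ! k = fs ! k" using Bsemi_idem by (simp add: Bstar_def)
    have "fs ! k * r = (\<Sum>i<length fs. fs ! k * fs ! i)"
      by (simp add: fs(4) sum_list_sum_nth atLeast0LessThan sum_distrib_left)
    also have "\<dots> = (\<Sum>i<length fs. if i = k then fs ! k else 0)"
      using fs(3) k idem by (intro sum.cong) auto
    also have "\<dots> = fs ! k" using k by simp
    finally show ?thesis using r B unfolding minimal_B_def by auto
  qed
  have len: "0 < length fs" "1 < length fs" using fs(1) by auto
  then have "r * r = fs ! 0 * fs ! 1" using summand by simp
  also have "\<dots> = 0" using fs(3)[rule_format, of 0 1] len by simp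
  finally show False using Bsemi_idem[OF minimal_B_in_Bsemi[OF r]] minimal_B_nonzero[OF r] by simp
qed

text \<open>For g in N, eps g = (sum of r eps g) = (sum of r) = 1, so the corner lemma applies
  with c = 1.\<close>
lemma stabilizer_strongly_graded:
  assumes E: "\<And>r. r \<in> E \<Longrightarrow> eps_central G eps r" and one: "(\<Sum>r\<in>E. r) = 1"
    and N: "N = {g \<in> carrier G. \<forall>r\<in>E. g \<in> Nset G eps r}"
  shows "strongly_graded_ring (G\<lparr>carrier := N\<rparr>) Sg (dsum_set N Sg) 1"
proof -
  have "subgroup (\<Inter> (insert (carrier G) (Nset G eps ` E))) G"
    using E by (intro subgroups_Inter) (auto simp: eps_central_def subgroup_self)
  moreover have "N = \<Inter> (insert (carrier G) (Nset G eps ` E))" using N by auto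
  ultimately have sub: "subgroup N G" by simp
  have "1 \<in> Sg \<one>"
    using E one add_subgroup_sum[OF add_subgroup_component[of \<one>], of E "\<lambda>r. r"]
    by (auto simp: eps_central_def minimal_B_in_Bsemi Bsemi_in_unit_component)
  then have "graded_ring (G\<lparr>carrier := N\<rparr>) Sg (dsum_set N Sg) 1"
    by (rule subgroup_subring_graded[OF sub])
  moreover have "eps g = 1" if "g \<in> N" for g
  proof -
    have "eps g = (\<Sum>r\<in>E. r * eps g)" by (simp add: one flip: sum_distrib_right)
    also have "\<dots> = 1" using that N one by (simp add: Nset_def)
    finally show ?thesis .
  qed
  then have "sumprods (Sg g) (Sg h) = Sg (g \<otimes> h)" if "g \<in> N" "h \<in> N" for g h
    using corner_sumprods_components[of 1 g h] that N by (simp add: central_def)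
  ultimately show ?thesis by (simp add: strongly_graded_ring_def)
qed

end

theorem mainTheorem10:
  fixes G :: "'g monoid" and Sg :: "'g \<Rightarrow> 'a::ring_1 set" and eps :: "'g \<Rightarrow> 'a"
    and E :: "'a set" and e' :: 'a
  assumes eps: "eps_strongly_graded G Sg UNIV 1 eps"
    and E: "E = {r. eps_central G eps r}"
    and finE: "finite E"
    and e': "e' = 1 - (\<Sum>r\<in>E. r)"
  shows "(\<forall>r\<in>E. r * r = r \<and> central r) \<and> e' * e' = e' \<and> central e' \<and>
         (\<forall>r\<in>E. \<forall>s\<in>E. r \<noteq> s \<longrightarrow> r * s = 0) \<and> (\<forall>r\<in>E. r * e' = 0 \<and> e' * r = 0) \<and>
         (\<Sum>r\<in>E. r) + e' = 1 \<and>
         is_internal_dsum (Some ` E \<union> {None})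
           (\<lambda>i. case i of None \<Rightarrow> range ((*) e') | Some r \<Rightarrow> range ((*) r)) UNIV \<and>
         (\<forall>r\<in>E.
            strongly_graded_ring (G\<lparr>carrier := Nset G eps r\<rparr>) (\<lambda>g. (*) r ` Sg g) (range ((*) r)) r \<and>
            \<not> (\<exists>fs. length fs \<ge> 2 \<and> set fs \<subseteq> Bstar G eps \<and>
                 (\<forall>i<length fs. \<forall>j<length fs. i \<noteq> j \<longrightarrow> fs ! i * fs ! j = 0) \<and>
                 r = sum_list fs)) \<and>
         (e' = 0 \<longrightarrow>
            (let N = {g \<in> carrier G. \<forall>r\<in>E. g \<in> Nset G eps r} in
             strongly_graded_ring (G\<lparr>carrier := N\<rparr>) Sg (dsum_set N Sg) 1)) \<and>
         (e' \<noteq> 0 \<longrightarrow>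
            eps_strongly_graded G (\<lambda>g. (*) e' ` Sg g) (range ((*) e')) e' (\<lambda>g. e' * eps g))"
proof -
  interpret eps_graded_ring G Sg eps by (rule eps_graded_ringI[OF eps])
  have idem_central: "\<forall>r\<in>E. r * r = r \<and> central r"
    using E eps_central_central eps_central_idem by auto
  have orth: "\<forall>r\<in>E. \<forall>s\<in>E. r \<noteq> s \<longrightarrow> r * s = 0"
    using E minimal_B_orthogonal by (auto simp: eps_central_def)
  note complement = orthogonal_central_idempotents_complement[OF finE idem_central orth e']
  have "e' * s \<in> Sg g" if "g \<in> carrier G" "s \<in> Sg g" for g s
  proof -
    have "(\<Sum>r\<in>E. r * s) \<in> Sg g"
      using that E by (intro add_subgroup_sum add_subgroup_component unit_component_left_mult)
        (auto simp: eps_central_def minimal_B_in_Bsemi Bsemi_in_unit_component)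
    then show ?thesis
      using that add_subgroup_diff[OF add_subgroup_component]
      by (simp add: e' left_diff_distrib sum_distrib_right)
  qed
  then have "eps_strongly_graded G (\<lambda>g. (*) e' ` Sg g) (range ((*) e')) e' (\<lambda>g. e' * eps g)"
    by (rule corner_eps_strongly_graded[OF complement(2,1)])
  moreover have "strongly_graded_ring (G\<lparr>carrier := N\<rparr>) Sg (dsum_set N Sg) 1"
    if "e' = 0" "N = {g \<in> carrier G. \<forall>r\<in>E. g \<in> Nset G eps r}" for N
    by (rule stabilizer_strongly_graded) (use that E e' in auto)
  ultimately show ?thesis
    using idem_central orth complement E e' eps_central_corner_strongly_graded
      minimal_B_not_orthogonal_sum by (simp add: eps_central_def Let_def)
qed

end
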